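(* Let $X$ be a real Banach space and let $\mathcal{G}^0\subset\mathcal{G}_X$ be a subgroup such that $X$ is convex-transitive with respect to $\mathcal{G}^0$, i.e. $\overline{\mathrm{conv}}(\{T(x): T\in\mathcal{G}^0\})=B_X$ for every $x\in S_X$. Let $C\subset S_X$ be norm-dense in $S_X$, and let $A\subset X$ be a closed subspace whose density character $\kappa=\mathrm{dens}(A)$ is infinite. Then there is a closed subspace $Y\subset X$ such that: (1) $A\subset Y$; (2) $\mathrm{dens}(Y)=\kappa$; (3) $Y$ is convex-transitive with respect to the subgroup $\mathcal{G}^0_Y=\{T|_Y : T\in\mathcal{G}^0,\ T(Y)=Y\}$ of the isometry group of $Y$; (4) $C\cap S_Y$ is norm-dense in $S_Y$.
   Context: $\mathcal{G}_X$ denotes the group of rotations of $X$, i.e. surjective linear isometries $X\to X$. The density character $\mathrm{dens}(T)$ of a topological space is the least cardinality of a dense subset. *)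

theory Defs
  imports "HOL-Analysis.Analysis"
begin

definition rotation :: "('a::real_normed_vector \<Rightarrow> 'a) \<Rightarrow> bool" where
  "rotation T \<longleftrightarrow> linear T \<and> (\<forall>x. norm (T x) = norm x) \<and> surj T"

definition rotation_subgroup :: "('a::real_normed_vector \<Rightarrow> 'a) set \<Rightarrow> bool" where
  "rotation_subgroup G \<longleftrightarrow> (\<forall>T\<in>G. rotation T) \<and> id \<in> G \<and>
     (\<forall>S\<in>G. \<forall>T\<in>G. S \<circ> T \<in> G) \<and> (\<forall>T\<in>G. inv T \<in> G)"

text \<open>Convex-transitivity of the closed subspace Y with respect to a family G of
  rotations of Y (given as maps on X restricted to Y): for every y in the unit sphere
  of Y, the closed convex hull of the orbit of y is the unit ball of Y.\<close>
definition convex_transitive_on :: "'a::real_normed_vector set \<Rightarrow> ('a \<Rightarrow> 'a) set \<Rightarrow> bool" where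
  "convex_transitive_on Y G \<longleftrightarrow>
     (\<forall>y\<in>Y. norm y = 1 \<longrightarrow> closure (convex hull {T y | T. T \<in> G}) = Y \<inter> cball 0 1)"

text \<open>D is a dense subset of S of minimal cardinality, i.e. card_of D is the density
  character dens(S).\<close>
definition dens_witness :: "'a::topological_space set \<Rightarrow> 'a set \<Rightarrow> bool" where
  "dens_witness S D \<longleftrightarrow> D \<subseteq> S \<and> S \<subseteq> closure D \<and>
     (\<forall>D'. D' \<subseteq> S \<and> S \<subseteq> closure D' \<longrightarrow> (card_of D, card_of D') \<in> ordLeq)"

end

theory Submission
  imports Defs
begin

unbundle cardinal_syntax

(* Starting from a dense subset DA of A of size kappa = dens A, we close DA under countably many
   finitary operations: addition, rational scaling, choosing a point of C near sgn x, and applying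
   the finitely many rotations (and their inverses) of a chosen finite family whose orbit of sgn y
   has a convex combination within 1/(n+1) of the retraction of z to the unit ball.  Such families
   exist because X is convex-transitive.  The resulting hull U still has size at most kappa.
   Its closure Y is then
   - a closed subspace (closure of a set closed under + and rational scaling),
   - convex-transitive for the rotations of G0 preserving Y, because the chosen families preserve
     Y and convex-transitivity can be verified on the dense subset U by a perturbation argument,
   - such that C is dense in its unit sphere, and
   - of density character exactly kappa (at most |U|, at least dens A by monotonicity). *)

lemma countable_card_le_infinite:
  assumes "countable A" and "infinite K"
  shows "|A| \<le>o |K|"
proof -
  from assms(1) obtain f :: "_ \<Rightarrow> nat" where "inj_on f A" unfolding countable_def by blast
  then have "|A| \<le>o |UNIV :: nat set|" using card_of_ordLeq by blast
  moreover have "|UNIV :: nat set| \<le>o |K|" using assms(2) infinite_iff_card_of_nat by blast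
  ultimately show ?thesis using ordLeq_transitive by blast
qed

lemma card_of_Times_le_infinite:
  "infinite K \<Longrightarrow> |A| \<le>o |K| \<Longrightarrow> |B| \<le>o |K| \<Longrightarrow> |A \<times> B| \<le>o |K|"
  using card_of_Times_ordLeq_infinite_Field[of "|K|" A B] by (simp add: Field_card_of card_of_card_order_on)

(* Every space has a dense subset of minimal cardinality (cardinals are well-ordered),
   i.e. the density character is always attained. *)
lemma dens_witness_exists: "\<exists>D. dens_witness S D"
proof -
  define DS where "DS = {D. D \<subseteq> S \<and> S \<subseteq> closure D}"
  have "S \<in> DS" unfolding DS_def using closure_subset by blast
  then obtain r where r: "r \<in> card_of ` DS" "\<forall>r'\<in>card_of ` DS. r \<le>o r'"
    using exists_minim_Well_order[of "card_of ` DS"] card_of_Well_order by blast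
  then obtain D where "D \<in> DS" "r = |D|" by blast
  then have "dens_witness S D" using r(2) unfolding dens_witness_def DS_def by auto
  then show ?thesis by blast
qed

(* For infinite D, pick a point of A
   within 1/(n+1) of each d in D, for every n; for finite D, A itself is contained in D. *)
lemma dense_subset_card:
  fixes A D :: "'a::metric_space set"
  assumes "A \<subseteq> closure D"
  shows "\<exists>E\<subseteq>A. A \<subseteq> closure E \<and> |E| \<le>o |D|"
proof (cases "finite D")
  case True
  then have "A \<subseteq> D" using assms by (simp add: finite_imp_closed)
  then show ?thesis using card_of_mono1 closure_subset by blast
next
  case False
  define I where "I = {(d, n). d \<in> D \<and> (\<exists>a\<in>A. dist a d < inverse (real (Suc n)))}"
  define pick where "pick = (\<lambda>(d, n). SOME a. a \<in> A \<and> dist a d < inverse (real (Suc n)))"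
  have pick: "pick (d, n) \<in> A \<and> dist (pick (d, n)) d < inverse (real (Suc n))" if "(d, n) \<in> I" for d n
  proof -
    have "\<exists>a. a \<in> A \<and> dist a d < inverse (real (Suc n))" using that unfolding I_def by blast
    then show ?thesis unfolding pick_def by (simp only: case_prod_conv) (rule someI_ex)
  qed
  define E where "E = pick ` I"
  have "E \<subseteq> A" unfolding E_def using pick by auto
  moreover have "A \<subseteq> closure E"
  proof
    fix a assume "a \<in> A"
    show "a \<in> closure E" unfolding closure_approachable
    proof (intro allI impI)
      fix e :: real assume "e > 0"
      obtain n where n: "inverse (real (Suc n)) < e / 2" using reals_Archimedean[of "e / 2"] \<open>e > 0\<close> by auto
      have "a \<in> closure D" using assms \<open>a \<in> A\<close> by blast
      then obtain d where d: "d \<in> D" "dist d a < inverse (real (Suc n))"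
        unfolding closure_approachable by (meson inverse_positive_iff_positive of_nat_0_less_iff zero_less_Suc)
      then have "(d, n) \<in> I" unfolding I_def using \<open>a \<in> A\<close> by (auto simp: dist_commute)
      then have "pick (d, n) \<in> E" "dist (pick (d, n)) d < inverse (real (Suc n))"
        using pick unfolding E_def by auto
      moreover have "dist (pick (d, n)) a \<le> dist (pick (d, n)) d + dist d a" by (rule dist_triangle)
      ultimately show "\<exists>x\<in>E. dist x a < e" using d n by (intro bexI[of _ "pick (d, n)"]) auto
    qed
  qed
  moreover have "|E| \<le>o |D|"
  proof -
    have "|E| \<le>o |I|" unfolding E_def by (rule card_of_image)
    also have "|I| \<le>o |D \<times> (UNIV :: nat set)|" unfolding I_def by (rule card_of_mono1) auto
    also have "|D \<times> (UNIV :: nat set)| \<le>o |D|"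
      using False by (intro card_of_Times_le_infinite card_of_mono1 countable_card_le_infinite) auto
    finally show ?thesis .
  qed
  ultimately show ?thesis by blast
qed

definition skolem_hull :: "('a set \<Rightarrow> 'a set) \<Rightarrow> 'a set \<Rightarrow> 'a set" where
  "skolem_hull step S0 = (\<Union>n. (step ^^ n) S0)"

lemma skolem_hull_base: "S0 \<subseteq> skolem_hull step S0"
  unfolding skolem_hull_def by (metis UN_upper UNIV_I funpow_0)

lemma skolem_hull_card:
  assumes K: "infinite K" and "|S0| \<le>o |K|" and step: "\<And>S. |S| \<le>o |K| \<Longrightarrow> |step S| \<le>o |K|"
  shows "|skolem_hull step S0| \<le>o |K|"
proof -
  have "|(step ^^ n) S0| \<le>o |K|" for n
    by (induction n) (simp_all add: assms)
  moreover have "|UNIV :: nat set| \<le>o |K|" by (rule countable_card_le_infinite[OF _ K]) simp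
  ultimately show ?thesis
    unfolding skolem_hull_def by (intro card_of_UNION_ordLeq_infinite K) auto
qed

lemma skolem_hull_closed:
  assumes extensive: "\<And>S. S \<subseteq> step S" and "finite F" and "F \<subseteq> skolem_hull step S0"
  shows "\<exists>S. F \<subseteq> S \<and> step S \<subseteq> skolem_hull step S0"
proof -
  have mono: "(step ^^ n) S0 \<subseteq> (step ^^ m) S0" if "n \<le> m" for n m
    using lift_Suc_mono_le[of "\<lambda>n. (step ^^ n) S0", OF _ that] extensive by simp
  have "\<exists>n. F \<subseteq> (step ^^ n) S0"
    using assms(2,3)
  proof (induction F rule: finite_induct)
    case (insert x F)
    then obtain n where n: "F \<subseteq> (step ^^ n) S0" by blast
    obtain m where m: "x \<in> (step ^^ m) S0" using insert.prems unfolding skolem_hull_def by blast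
    have "insert x F \<subseteq> (step ^^ max n m) S0" using n m mono[of n "max n m"] mono[of m "max n m"] by auto
    then show ?case by blast
  qed simp
  then obtain n where "F \<subseteq> (step ^^ n) S0" by blast
  moreover have "(step ^^ Suc n) S0 \<subseteq> skolem_hull step S0"
    unfolding skolem_hull_def by blast
  ultimately show ?thesis by auto
qed

lemma rotation_bounded_linear:
  assumes "rotation T"
  shows "bounded_linear T"
proof -
  have L: "linear T" and N: "\<And>x. norm (T x) = norm x" using assms unfolding rotation_def by auto
  show ?thesis
  proof (rule bounded_linear_intro[where K = 1])
    show "T (x + y) = T x + T y" for x y using L by (simp add: linear_add)
    show "T (r *\<^sub>R x) = r *\<^sub>R T x" for r x using L by (simp add: linear_scale)
    show "norm (T x) \<le> norm x * 1" for x using N by simp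
  qed
qed

lemma rotation_isometric:
  assumes "rotation T"
  shows "norm (T a - T b) = norm (a - b)"
proof -
  have "T a - T b = T (a - b)" using assms unfolding rotation_def by (simp add: linear_diff)
  then show ?thesis using assms unfolding rotation_def by simp
qed

lemma rotation_preserves_closure:
  assumes rot: "rotation T" "rotation (inv T)" and inv: "T ` U \<subseteq> U" "inv T ` U \<subseteq> U"
  shows "T ` closure U = closure U"
proof -
  have "R ` closure U \<subseteq> closure U" if "rotation R" "R ` U \<subseteq> U" for R
    using that closure_subset
    by (intro image_closure_subset linear_continuous_on rotation_bounded_linear) blast+
  then have sub: "T ` closure U \<subseteq> closure U" and sub_inv: "inv T ` closure U \<subseteq> closure U"
    using rot inv by blast+
  have "surj T" using rot(1) unfolding rotation_def by blast
  then have "v = T (inv T v)" for v by (simp add: surj_f_inv_f)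
  then have "closure U \<subseteq> T ` closure U" using sub_inv by blast
  then show ?thesis using sub by blast
qed

lemma norm_sgn_minus_self:
  fixes x :: "'a::real_normed_vector"
  assumes "x \<noteq> 0"
  shows "norm (sgn x - x) = \<bar>1 - norm x\<bar>"
proof -
  have "sgn x - x = (1 / norm x - 1) *\<^sub>R x" by (simp add: sgn_div_norm scaleR_diff_left divide_inverse)
  then have "norm (sgn x - x) = \<bar>(1 / norm x - 1) * norm x\<bar>" by (simp add: abs_mult)
  also have "\<dots> = \<bar>1 - norm x\<bar>" using assms by (simp add: left_diff_distrib)
  finally show ?thesis .
qed

lemma sgn_approx:
  fixes x u :: "'a::real_normed_vector"
  assumes "x \<noteq> 0" and "norm u = 1"
  shows "norm (sgn x - u) \<le> 2 * norm (x - u)"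
proof -
  have "norm (sgn x - u) \<le> norm (sgn x - x) + norm (x - u)"
    using norm_triangle_ineq[of "sgn x - x" "x - u"] by simp
  moreover have "norm (sgn x - x) \<le> norm (x - u)"
    using norm_sgn_minus_self[OF assms(1)] assms(2) norm_triangle_ineq3[of x u] by simp
  ultimately show ?thesis by simp
qed

definition radial_retraction :: "'a::real_normed_vector \<Rightarrow> 'a" where
  "radial_retraction x = x /\<^sub>R max 1 (norm x)"

lemma norm_radial_retraction: "norm (radial_retraction x) \<le> 1"
  unfolding radial_retraction_def by (cases "norm x \<le> 1") (auto simp: divide_simps)

lemma radial_retraction_approx:
  fixes x u :: "'a::real_normed_vector"
  assumes "norm u \<le> 1"
  shows "norm (radial_retraction x - u) \<le> 2 * norm (x - u)"
proof (cases "norm x \<le> 1")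
  case True
  then show ?thesis unfolding radial_retraction_def by simp
next
  case False
  then have "x \<noteq> 0" and r: "radial_retraction x = sgn x"
    unfolding radial_retraction_def by (auto simp: sgn_div_norm)
  have "norm (sgn x - u) \<le> norm (sgn x - x) + norm (x - u)"
    using norm_triangle_ineq[of "sgn x - x" "x - u"] by simp
  moreover have "norm (sgn x - x) \<le> norm (x - u)"
    using norm_sgn_minus_self[OF \<open>x \<noteq> 0\<close>] False assms norm_triangle_ineq2[of x u] by simp
  ultimately show ?thesis using r by simp
qed

(* The closure of a nonempty set closed under addition and rational scaling is a linear
   subspace, by continuity of addition and scalar multiplication and density of the rationals. *)
lemma subspace_closure_of_rat_closed:
  fixes U :: "'a::real_normed_vector set"
  assumes "U \<noteq> {}"
    and add: "\<And>x y. x \<in> U \<Longrightarrow> y \<in> U \<Longrightarrow> x + y \<in> U"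
    and scale: "\<And>x c. x \<in> U \<Longrightarrow> c \<in> \<rat> \<Longrightarrow> c *\<^sub>R x \<in> U"
  shows "subspace (closure U)"
proof -
  have "(\<lambda>(x, y). x + y) ` closure (U \<times> U) \<subseteq> closure U"
    by (rule image_closure_subset)
       (use add closure_subset[of U] in \<open>auto intro!: continuous_intros simp: case_prod_unfold\<close>)
  then have Yadd: "x + y \<in> closure U" if "x \<in> closure U" "y \<in> closure U" for x y
    using that by (auto simp: closure_Times)
  have "(\<lambda>(c, x). c *\<^sub>R x) ` closure (\<rat> \<times> U) \<subseteq> closure U"
    by (rule image_closure_subset)
       (use scale closure_subset[of U] in \<open>auto intro!: continuous_intros simp: case_prod_unfold\<close>)
  then have Yscale: "c *\<^sub>R x \<in> closure U" if "x \<in> closure U" for c x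
    using that by (auto simp: closure_Times Rats_closure_real)
  obtain u where "u \<in> closure U" using assms(1) closure_subset by blast
  then have "0 \<in> closure U" using Yscale[of u 0] by simp
  then show ?thesis using Yadd Yscale by (intro subspaceI)
qed

lemma convex_hull_orbit_perturb:
  assumes close: "\<And>T. T \<in> H \<Longrightarrow> norm (T u - T v) \<le> r"
    and w: "w \<in> convex hull ((\<lambda>T. T u) ` H)"
  shows "\<exists>a\<in>convex hull ((\<lambda>T. T v) ` H). norm (w - a) \<le> r"
proof -
  define P where "P = (\<Union>a\<in>convex hull ((\<lambda>T. T v) ` H). \<Union>b\<in>cball 0 r. {a + b})"
  have "convex P" unfolding P_def by (intro convex_sums convex_convex_hull convex_cball)
  moreover have "(\<lambda>T. T u) ` H \<subseteq> P"
  proof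
    fix p assume "p \<in> (\<lambda>T. T u) ` H"
    then obtain T where T: "T \<in> H" "p = T u" by blast
    have "T v \<in> convex hull ((\<lambda>T. T v) ` H)" using T(1) hull_subset by fastforce
    moreover have "T u - T v \<in> cball 0 r" using close[OF T(1)] by simp
    moreover have "p = T v + (T u - T v)" using T by simp
    ultimately show "p \<in> P" unfolding P_def by blast
  qed
  ultimately have "convex hull ((\<lambda>T. T u) ` H) \<subseteq> P" by (rule hull_minimal[rotated])
  then obtain a b where "a \<in> convex hull ((\<lambda>T. T v) ` H)" "norm b \<le> r" "w = a + b"
    using w unfolding P_def by auto
  then show ?thesis by (intro bexI[of _ a]) auto
qed

lemma closure_convex_orbit_subset:
  assumes "subspace Y" and "closed Y" and "y \<in> Y" and "norm y = 1"
    and H: "\<And>T. T \<in> H \<Longrightarrow> rotation T \<and> T ` Y \<subseteq> Y"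
  shows "closure (convex hull ((\<lambda>T. T y) ` H)) \<subseteq> Y \<inter> cball 0 1"
proof (rule closure_minimal)
  have "(\<lambda>T. T y) ` H \<subseteq> Y \<inter> cball 0 1"
    using H assms(3,4) unfolding rotation_def by auto
  moreover have "convex (Y \<inter> cball 0 1)"
    using subspace_imp_convex[OF assms(1)] by (intro convex_Int convex_cball)
  ultimately show "convex hull ((\<lambda>T. T y) ` H) \<subseteq> Y \<inter> cball 0 1"
    by (rule hull_minimal)
  show "closed (Y \<inter> cball 0 1)" using assms(2) by (intro closed_Int closed_cball)
qed

(* A general unit vector y is then approximated by some sgn y', and the perturbation lemma
   transfers the approximation from the orbit of sgn y' to the orbit of y. *)
lemma convex_transitive_from_dense:
  fixes U Y :: "'a::real_normed_vector set"
  assumes "subspace Y" and "closed Y" and dense: "Y \<subseteq> closure U"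
    and H: "\<And>T. T \<in> H \<Longrightarrow> rotation T \<and> T ` Y \<subseteq> Y"
    and approx: "\<And>y z e. y \<in> U \<Longrightarrow> z \<in> U \<Longrightarrow> y \<noteq> 0 \<Longrightarrow> e > 0 \<Longrightarrow>
                   \<exists>w\<in>convex hull ((\<lambda>T. T (sgn y)) ` H). dist w (radial_retraction z) < e"
    and y: "y \<in> Y" "norm y = 1"
  shows "closure (convex hull ((\<lambda>T. T y) ` H)) = Y \<inter> cball 0 1"
proof
  show "closure (convex hull ((\<lambda>T. T y) ` H)) \<subseteq> Y \<inter> cball 0 1"
    using closure_convex_orbit_subset assms(1,2) y H by blast
  show "Y \<inter> cball 0 1 \<subseteq> closure (convex hull ((\<lambda>T. T y) ` H))"
  proof
    fix z assume z: "z \<in> Y \<inter> cball 0 1"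
    show "z \<in> closure (convex hull ((\<lambda>T. T y) ` H))" unfolding closure_approachable
    proof (intro allI impI)
      fix e :: real assume "e > 0"
      define d where "d = min (e / 5) (1 / 2)"
      have d: "d > 0" "5 * d \<le> e" "d \<le> 1 / 2" using \<open>e > 0\<close> unfolding d_def by auto
      have "y \<in> closure U" using dense y(1) by blast
      then obtain y' where y': "y' \<in> U" "norm (y' - y) < d"
        using d(1) unfolding closure_approachable dist_norm by blast
      have "y' \<noteq> 0" using y'(2) y(2) d(3) by auto
      then have sy: "norm (sgn y' - y) < 2 * d" using sgn_approx[OF _ y(2), of y'] y'(2) by linarith
      have "z \<in> closure U" using dense z by blast
      then obtain z' where z': "z' \<in> U" "norm (z' - z) < d"
        using d(1) unfolding closure_approachable dist_norm by blast
      have rz: "norm (radial_retraction z' - z) < 2 * d"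
        using radial_retraction_approx[of z z'] z z'(2) by simp
      obtain w where w: "w \<in> convex hull ((\<lambda>T. T (sgn y')) ` H)" "dist w (radial_retraction z') < d"
        using approx[OF y'(1) z'(1) \<open>y' \<noteq> 0\<close> d(1)] by blast
      have "norm (T (sgn y') - T y) \<le> norm (sgn y' - y)" if "T \<in> H" for T
        using H[OF that] rotation_isometric[of T "sgn y'" y] by simp
      then obtain a where a: "a \<in> convex hull ((\<lambda>T. T y) ` H)" "norm (w - a) \<le> norm (sgn y' - y)"
        using convex_hull_orbit_perturb[OF _ w(1)] by blast
      have "dist a z \<le> norm (w - a) + dist w (radial_retraction z') + norm (radial_retraction z' - z)"
        using dist_triangle[of a z w] dist_triangle[of w z "radial_retraction z'"]
        by (simp add: dist_norm norm_minus_commute)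
      then have "dist a z < e" using a(2) sy w(2) rz d(2) by linarith
      then show "\<exists>a\<in>convex hull ((\<lambda>T. T y) ` H). dist a z < e" using a(1) by blast
    qed
  qed
qed

lemma sphere_dense_from_dense:
  fixes U Y :: "'a::real_normed_vector set"
  assumes "C \<subseteq> sphere 0 1" and "U \<subseteq> Y" and dense: "Y \<subseteq> closure U"
    and approx: "\<And>x e. x \<in> U \<Longrightarrow> x \<noteq> 0 \<Longrightarrow> e > 0 \<Longrightarrow> \<exists>c\<in>C \<inter> U. dist c (sgn x) < e"
  shows "Y \<inter> sphere 0 1 \<subseteq> closure (C \<inter> Y \<inter> sphere 0 1)"
proof
  fix u assume u: "u \<in> Y \<inter> sphere 0 1"
  show "u \<in> closure (C \<inter> Y \<inter> sphere 0 1)" unfolding closure_approachable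
  proof (intro allI impI)
    fix e :: real assume "e > 0"
    define d where "d = min (e / 3) (1 / 2)"
    have d: "d > 0" "3 * d \<le> e" "d \<le> 1 / 2" using \<open>e > 0\<close> unfolding d_def by auto
    have "u \<in> closure U" using dense u by blast
    then obtain x where x: "x \<in> U" "norm (x - u) < d"
      using d(1) unfolding closure_approachable dist_norm by blast
    have "x \<noteq> 0" using x(2) u d(3) by auto
    then have sx: "norm (sgn x - u) < 2 * d" using sgn_approx[of x u] u x(2) by simp
    obtain c where c: "c \<in> C \<inter> U" "dist c (sgn x) < d" using approx[OF x(1) \<open>x \<noteq> 0\<close> d(1)] by blast
    have "dist c u \<le> dist c (sgn x) + norm (sgn x - u)"
      using dist_triangle[of c u "sgn x"] by (simp add: dist_norm)
    then have "dist c u < e" using c(2) sx d(2) by linarith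
    moreover have "c \<in> C \<inter> Y \<inter> sphere 0 1" using c(1) assms(1,2) by blast
    ultimately show "\<exists>c\<in>C \<inter> Y \<inter> sphere 0 1. dist c u < e" by blast
  qed
qed

lemma restricted_orbit:
  assumes "y \<in> Y"
  shows "{R y | R. R \<in> {(\<lambda>v. if v \<in> Y then T v else undefined) | T. P T}} = (\<lambda>T. T y) ` {T. P T}"
proof (intro equalityI subsetI)
  fix x assume "x \<in> (\<lambda>T. T y) ` {T. P T}"
  then obtain T where "P T" "x = T y" by blast
  then show "x \<in> {R y | R. R \<in> {(\<lambda>v. if v \<in> Y then T v else undefined) | T. P T}}"
    using assms by (intro CollectI exI[of _ "\<lambda>v. if v \<in> Y then T v else undefined"]) auto
qed (use assms in auto)

definition approximating_family ::
    "('a::real_normed_vector \<Rightarrow> 'a) set \<Rightarrow> 'a \<Rightarrow> 'a \<Rightarrow> nat \<Rightarrow> ('a \<Rightarrow> 'a) set \<Rightarrow> bool" where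
  "approximating_family G y z n F \<longleftrightarrow> finite F \<and> F \<subseteq> G \<and>
     (\<exists>w\<in>convex hull ((\<lambda>T. T (sgn y)) ` F). dist w (radial_retraction z) < inverse (real (Suc n)))"

definition orbit_approx ::
    "('a::real_normed_vector \<Rightarrow> 'a) set \<Rightarrow> 'a \<Rightarrow> 'a \<Rightarrow> nat \<Rightarrow> ('a \<Rightarrow> 'a) set" where
  "orbit_approx G y z n =
     (if \<exists>F. approximating_family G y z n F then SOME F. approximating_family G y z n F else {})"

lemma orbit_approx_family: "finite (orbit_approx G y z n) \<and> orbit_approx G y z n \<subseteq> G"
proof (cases "\<exists>F. approximating_family G y z n F")
  case True
  then have "approximating_family G y z n (orbit_approx G y z n)"
    unfolding orbit_approx_def by (simp add: someI_ex)
  then show ?thesis unfolding approximating_family_def by blast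
qed (simp add: orbit_approx_def)

lemma orbit_approx_approximates:
  assumes ct: "convex_transitive_on (UNIV :: 'a::real_normed_vector set) G" and "y \<noteq> 0"
  shows "\<exists>w\<in>convex hull ((\<lambda>T. T (sgn y)) ` orbit_approx G y z n).
           dist w (radial_retraction z) < inverse (real (Suc n))"
proof -
  have "norm (sgn y) = 1" using \<open>y \<noteq> 0\<close> by (simp add: norm_sgn)
  then have "radial_retraction z \<in> closure (convex hull ((\<lambda>T. T (sgn y)) ` G))"
    using ct norm_radial_retraction[of z] unfolding convex_transitive_on_def by (auto simp: setcompr_eq_image)
  then obtain w where w: "w \<in> convex hull ((\<lambda>T. T (sgn y)) ` G)"
      "dist w (radial_retraction z) < inverse (real (Suc n))"
    unfolding closure_approachable by (meson inverse_positive_iff_positive of_nat_0_less_iff zero_less_Suc)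
  then obtain S where S: "finite S" "S \<subseteq> (\<lambda>T. T (sgn y)) ` G" "w \<in> convex hull S"
    unfolding convex_hull_explicit by blast
  then obtain F where "F \<subseteq> G" "finite F" "S = (\<lambda>T. T (sgn y)) ` F"
    using finite_subset_image by metis
  then have "approximating_family G y z n F"
    unfolding approximating_family_def using S(3) w(2) by blast
  then have "approximating_family G y z n (orbit_approx G y z n)"
    unfolding orbit_approx_def by (auto intro: someI_ex)
  then show ?thesis unfolding approximating_family_def by blast
qed

definition sphere_approx :: "'a::real_normed_vector set \<Rightarrow> 'a \<Rightarrow> nat \<Rightarrow> 'a" where
  "sphere_approx C x n = (SOME c. c \<in> C \<and> dist c (sgn x) < inverse (real (Suc n)))"

lemma sphere_approx_approximates:
  assumes "sphere 0 1 \<subseteq> closure C" and "x \<noteq> 0"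
  shows "sphere_approx C x n \<in> C \<and> dist (sphere_approx C x n) (sgn x) < inverse (real (Suc n))"
proof -
  have "sgn x \<in> closure C" using assms by (auto simp: norm_sgn)
  then have "\<exists>c. c \<in> C \<and> dist c (sgn x) < inverse (real (Suc n))"
    unfolding closure_approachable by (meson inverse_positive_iff_positive of_nat_0_less_iff zero_less_Suc)
  then show ?thesis unfolding sphere_approx_def by (rule someI_ex)
qed

definition local_ops ::
    "('a::real_normed_vector \<Rightarrow> 'a) set \<Rightarrow> 'a set \<Rightarrow> 'a \<Rightarrow> 'a \<Rightarrow> 'a \<Rightarrow> nat \<Rightarrow> rat \<Rightarrow> 'a set" where
  "local_ops G C x y z n q =
     {x, x + y, real_of_rat q *\<^sub>R x, sphere_approx C x n} \<union>
     (\<lambda>T. T x) ` (orbit_approx G y z n \<union> inv ` orbit_approx G y z n)"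

definition hull_step ::
    "('a::real_normed_vector \<Rightarrow> 'a) set \<Rightarrow> 'a set \<Rightarrow> 'a set \<Rightarrow> 'a set" where
  "hull_step G C S =
     (\<Union>(x, y, z, n, q) \<in> S \<times> S \<times> S \<times> (UNIV :: nat set) \<times> (UNIV :: rat set). local_ops G C x y z n q)"

lemma hull_step_card:
  assumes K: "infinite K" and S: "|S| \<le>o |K|"
  shows "|hull_step G C S| \<le>o |K|"
  unfolding hull_step_def
proof (rule card_of_UNION_ordLeq_infinite[OF K], safe)
  have "|UNIV :: nat set| \<le>o |K|" "|UNIV :: rat set| \<le>o |K|"
    using K by (auto intro: countable_card_le_infinite)
  then show "|S \<times> S \<times> S \<times> (UNIV :: nat set) \<times> (UNIV :: rat set)| \<le>o |K|"
    using S by (intro card_of_Times_le_infinite[OF K])+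
  show "|local_ops G C x y z n q| \<le>o |K|" for x y z n q
    using orbit_approx_family[of G y z n] K
    by (intro countable_card_le_infinite countable_finite) (auto simp: local_ops_def)
qed

lemma hull_step_extensive: "S \<subseteq> hull_step G C S"
proof
  fix x assume "x \<in> S"
  then have "x \<in> local_ops G C x x x 0 0" "(x, x, x, 0, 0) \<in> S \<times> S \<times> S \<times> (UNIV :: nat set) \<times> (UNIV :: rat set)"
    unfolding local_ops_def by auto
  then show "x \<in> hull_step G C S" unfolding hull_step_def by blast
qed

lemma skolem_hull_local_ops:
  assumes "{x, y, z} \<subseteq> skolem_hull (hull_step G C) S0"
  shows "local_ops G C x y z n q \<subseteq> skolem_hull (hull_step G C) S0"
proof -
  obtain S where "{x, y, z} \<subseteq> S" "hull_step G C S \<subseteq> skolem_hull (hull_step G C) S0"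
    using skolem_hull_closed[OF hull_step_extensive _ assms] by blast
  moreover have "local_ops G C x y z n q \<subseteq> hull_step G C S" if "{x, y, z} \<subseteq> S"
  proof -
    have "(x, y, z, n, q) \<in> S \<times> S \<times> S \<times> (UNIV :: nat set) \<times> (UNIV :: rat set)" using that by simp
    from UN_upper[OF this, of "\<lambda>(x, y, z, n, q). local_ops G C x y z n q"]
    show ?thesis unfolding hull_step_def by simp
  qed
  ultimately show ?thesis by blast
qed

(* The approximating families chosen for points of a set U closed under the local operations
   consist of rotations of G preserving the closure of U: U is mapped into itself by each such
   map and by its inverse. *)
lemma orbit_approx_preserves_closure:
  assumes G: "rotation_subgroup G"
    and ops: "\<And>x y z n q. x \<in> U \<Longrightarrow> y \<in> U \<Longrightarrow> z \<in> U \<Longrightarrow> local_ops G C x y z n q \<subseteq> U"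
    and "y \<in> U" "z \<in> U" and T: "T \<in> orbit_approx G y z n"
  shows "T \<in> G \<and> T ` closure U = closure U"
proof -
  have "T \<in> G" using T orbit_approx_family by blast
  then have "rotation T" "rotation (inv T)" using G unfolding rotation_subgroup_def by auto
  moreover have "T x \<in> U" "inv T x \<in> U" if "x \<in> U" for x
    using ops[OF that \<open>y \<in> U\<close> \<open>z \<in> U\<close>, of n 0] T unfolding local_ops_def by blast+
  ultimately have "T ` closure U = closure U" by (intro rotation_preserves_closure) auto
  then show ?thesis using \<open>T \<in> G\<close> by blast
qed

(* The closure Y of a set closed under the local operations is convex-transitive for the
   rotations of G preserving Y: the chosen families witness the approximation hypothesis of
   the dense-subset criterion. *)
lemma convex_transitive_closure_of_ops_closed:
  fixes U :: "'a::real_normed_vector set"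
  assumes G: "rotation_subgroup G" and ct: "convex_transitive_on (UNIV :: 'a set) G"
    and ops: "\<And>x y z n q. x \<in> U \<Longrightarrow> y \<in> U \<Longrightarrow> z \<in> U \<Longrightarrow> local_ops G C x y z n q \<subseteq> U"
    and "subspace (closure U)"
  defines "Y \<equiv> closure U"
  shows "convex_transitive_on Y {(\<lambda>v. if v \<in> Y then T v else undefined) | T. T \<in> G \<and> T ` Y = Y}"
proof -
  define H where "H = {T. T \<in> G \<and> T ` Y = Y}"
  have approx: "\<exists>w\<in>convex hull ((\<lambda>T. T (sgn y)) ` H). dist w (radial_retraction z) < e"
    if "y \<in> U" "z \<in> U" "y \<noteq> 0" "e > 0" for y z e
  proof -
    obtain n where n: "inverse (real (Suc n)) < e" using reals_Archimedean \<open>e > 0\<close> by blast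
    have "orbit_approx G y z n \<subseteq> H"
      using orbit_approx_preserves_closure[OF G ops that(1,2)] unfolding H_def Y_def by blast
    then have "convex hull ((\<lambda>T. T (sgn y)) ` orbit_approx G y z n) \<subseteq> convex hull ((\<lambda>T. T (sgn y)) ` H)"
      by (intro hull_mono image_mono)
    then show ?thesis using orbit_approx_approximates[OF ct \<open>y \<noteq> 0\<close>, of z n] n by force
  qed
  have rot: "rotation T" if "T \<in> G" for T
    using G that unfolding rotation_subgroup_def by auto
  show ?thesis unfolding convex_transitive_on_def
  proof (intro ballI impI)
    fix y assume "y \<in> Y" "norm y = 1"
    then have "closure (convex hull ((\<lambda>T. T y) ` H)) = Y \<inter> cball 0 1"
      using \<open>subspace (closure U)\<close> approx rot
      by (intro convex_transitive_from_dense[where U = U]) (auto simp: Y_def H_def)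
    then show "closure (convex hull {R y | R. R \<in> {(\<lambda>v. if v \<in> Y then T v else undefined) | T.
        T \<in> G \<and> T ` Y = Y}}) = Y \<inter> cball 0 1"
      using restricted_orbit[OF \<open>y \<in> Y\<close>, of "\<lambda>T. T \<in> G \<and> T ` Y = Y"] unfolding H_def by simp
  qed
qed

lemma closure_of_ops_closed_set:
  fixes U :: "'a::real_normed_vector set"
  assumes G: "rotation_subgroup G" and ct: "convex_transitive_on (UNIV :: 'a set) G"
    and C: "C \<subseteq> sphere 0 1" "sphere 0 1 \<subseteq> closure C" and "U \<noteq> {}"
    and ops: "\<And>x y z n q. x \<in> U \<Longrightarrow> y \<in> U \<Longrightarrow> z \<in> U \<Longrightarrow> local_ops G C x y z n q \<subseteq> U"
  defines "Y \<equiv> closure U"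
  shows "subspace Y"
    and "convex_transitive_on Y {(\<lambda>v. if v \<in> Y then T v else undefined) | T. T \<in> G \<and> T ` Y = Y}"
    and "Y \<inter> sphere 0 1 \<subseteq> closure (C \<inter> Y \<inter> sphere 0 1)"
proof -
  have add: "x + y \<in> U" if "x \<in> U" "y \<in> U" for x y
    using ops[OF that(1,2,1)] unfolding local_ops_def by blast
  have scale: "c *\<^sub>R x \<in> U" if "x \<in> U" "c \<in> \<rat>" for x c
  proof -
    obtain q where "c = real_of_rat q" using \<open>c \<in> \<rat>\<close> Rats_cases by blast
    then show ?thesis using ops[OF that(1,1,1), of 0 q] unfolding local_ops_def by blast
  qed
  show "subspace Y"
    unfolding Y_def using \<open>U \<noteq> {}\<close> add scale by (rule subspace_closure_of_rat_closed)
  then show "convex_transitive_on Y {(\<lambda>v. if v \<in> Y then T v else undefined) | T. T \<in> G \<and> T ` Y = Y}"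
    using convex_transitive_closure_of_ops_closed[OF G ct ops] unfolding Y_def by blast
  have "\<exists>c\<in>C \<inter> U. dist c (sgn x) < e" if "x \<in> U" "x \<noteq> 0" "e > 0" for x e
  proof -
    obtain n where n: "inverse (real (Suc n)) < e" using reals_Archimedean \<open>e > 0\<close> by blast
    have "sphere_approx C x n \<in> U" using ops[OF that(1,1,1), of n 0] unfolding local_ops_def by blast
    then show ?thesis using sphere_approx_approximates[OF C(2) that(2), of n] n by force
  qed
  then show "Y \<inter> sphere 0 1 \<subseteq> closure (C \<inter> Y \<inter> sphere 0 1)"
    unfolding Y_def by (intro sphere_dense_from_dense[OF C(1) closure_subset subset_refl])
qed

(* The theorem: take Y to be the closure of the hull of DA.  Then Y contains A, and
   dens Y is at most the size of the hull, which is at most dens A = |DA|; conversely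
   dens A is at most dens Y by monotonicity of the density character. *)
theorem theorem2p4:
  fixes G0 :: "('a::banach \<Rightarrow> 'a) set" and C A :: "'a set" and DA :: "'a set"
  assumes "rotation_subgroup G0"
    and "convex_transitive_on (UNIV :: 'a set) G0"
    and "C \<subseteq> sphere 0 1" and "sphere 0 1 \<subseteq> closure C"
    and "subspace A" and "closed A"
    and "dens_witness A DA" and "infinite DA"
  shows "\<exists>Y DY. subspace Y \<and> closed Y \<and> A \<subseteq> Y \<and>
           dens_witness Y DY \<and> (card_of DY, card_of DA) \<in> ordIso \<and>
           convex_transitive_on Y {(\<lambda>y. if y \<in> Y then T y else undefined) | T. T \<in> G0 \<and> T ` Y = Y} \<and>
           Y \<inter> sphere 0 1 \<subseteq> closure (C \<inter> Y \<inter> sphere 0 1)"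
proof -
  define U where "U = skolem_hull (hull_step G0 C) DA"
  define Y where "Y = closure U"
  have "DA \<subseteq> U" unfolding U_def by (rule skolem_hull_base)
  then have "U \<noteq> {}" using \<open>infinite DA\<close> by auto
  have ops: "local_ops G0 C x y z n q \<subseteq> U" if "x \<in> U" "y \<in> U" "z \<in> U" for x y z n q
    using that unfolding U_def by (intro skolem_hull_local_ops) blast
  note Y_props = closure_of_ops_closed_set[OF assms(1-4) \<open>U \<noteq> {}\<close> ops, folded Y_def]
  have "A \<subseteq> Y" using assms(7) \<open>DA \<subseteq> U\<close> closure_mono unfolding dens_witness_def Y_def by blast
  have card_U: "|U| \<le>o |DA|"
    unfolding U_def using \<open>infinite DA\<close> by (intro skolem_hull_card hull_step_card ordLeq_refl card_of_Card_order)
  obtain DY where DY: "dens_witness Y DY" using dens_witness_exists by blast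
  then have "|DY| \<le>o |U|" using closure_subset unfolding dens_witness_def Y_def by blast
  then have "|DY| \<le>o |DA|" using card_U ordLeq_transitive by blast
  moreover have "|DA| \<le>o |DY|"
  proof -
    obtain E where "E \<subseteq> A" "A \<subseteq> closure E" "|E| \<le>o |DY|"
      using dense_subset_card[of A DY] \<open>A \<subseteq> Y\<close> DY unfolding dens_witness_def by blast
    then show ?thesis using assms(7) ordLeq_transitive unfolding dens_witness_def by blast
  qed
  ultimately have "(card_of DY, card_of DA) \<in> ordIso" using ordIso_iff_ordLeq by blast
  then show ?thesis using Y_props DY \<open>A \<subseteq> Y\<close> unfolding Y_def by auto
qed

end
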